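(* Let $R$ be a ring satisfying condition (C): every subring of $Q=Q_{\max}^r(R)$ containing $R$ is flat as a left $R$-module. Let $Q_\alpha$ be the rings of the construction described in the context and $Q^{(\alpha)}$ the rings of Morita's construction starting from $Q$. Then $Q_\alpha=Q^{(\alpha)}$ for every ordinal $\alpha$.
   Context: Rings are associative with unit; modules are right modules. For a hereditary torsion theory with Gabriel filter $\mathcal{E}$ (set of right ideals $I$ with $R/I$ torsion), $R_{\mathcal{E}}=\varinjlim_{I\in\mathcal{E}}\mathrm{Hom}_R(I,R/\mathcal{T}R)$ is its right ring of quotients; for faithful torsion theories it is a subring of $Q_{\max}^r(R)$. For $S\supseteq R$ flat as a left $R$-module, $\tau_S$ is the hereditary torsion theory whose torsion modules are those $M$ with $M\otimes_R S=0$. Construction of $Q_\alpha$: $Q_0=Q_{\max}^r(R)$ (ring of quotients of the Lambek torsion theory, whose filter $\mathcal{E}_0$ is the set of dense right ideals). $\mathcal{E}_{\alpha+1}$ is the Gabriel filter of $\tau_{Q_\alpha}$, namely $\{I: IQ_\alpha=Q_\alpha\}$, and $Q_{\alpha+1}=R_{\mathcal{E}_{\alpha+1}}$. For a limit ordinal $\alpha$, $\mathcal{E}_\alpha=\bigcap_{\beta<\alpha}\mathcal{E}_\beta$ and $Q_\alpha=R_{\mathcal{E}_\alpha}=\bigcap_{\beta<\alpha}Q_\beta$. Morita's construction: for a ring extension $S$ of $R$ and $x\in S$, let $(R:x)=\{r\in R: xr\in R\}$, and $S'=\{s\in S: (R:sr)S=S\text{ for every } r\in R\}$ (a subring of $S$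 containing $R$). Set $Q^{(0)}=Q$, $Q^{(\alpha+1)}=(Q^{(\alpha)})'$, and $Q^{(\alpha)}=\bigcap_{\beta<\alpha}Q^{(\beta)}$ for limit ordinals $\alpha$. *)

theory Defs
  imports Main
begin

text \<open>Convention: the ambient ring type 'a plays the role of Q = Q_max^r(R);
  R is a subring (a set of elements of 'a). Modules are right modules.\<close>

definition subring :: "'a::ring_1 set \<Rightarrow> bool" where
  "subring S \<longleftrightarrow> 1 \<in> S \<and> (\<forall>x\<in>S. \<forall>y\<in>S. x - y \<in> S \<and> x * y \<in> S)"

definition right_ideal :: "'a::ring_1 set \<Rightarrow> 'a set \<Rightarrow> bool" where
  "right_ideal R I \<longleftrightarrow> I \<subseteq> R \<and> 0 \<in> I \<and> (\<forall>x\<in>I. \<forall>y\<in>I. x - y \<in> I)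
     \<and> (\<forall>x\<in>I. \<forall>r\<in>R. x * r \<in> I)"

text \<open>Dense right ideals of R (the Gabriel filter of the Lambek torsion theory).\<close>
definition dense_right_ideal :: "'a::ring_1 set \<Rightarrow> 'a set \<Rightarrow> bool" where
  "dense_right_ideal R I \<longleftrightarrow> right_ideal R I \<and>
     (\<forall>r1\<in>R. \<forall>r2\<in>R. r1 \<noteq> 0 \<longrightarrow> (\<exists>r\<in>R. r1 * r \<noteq> 0 \<and> r2 * r \<in> I))"

text \<open>Q (= UNIV of type 'a) is a maximal right ring of quotients of R
  (Utumi/Lambek characterisation): Q is a rational (dense) extension of R_R,
  and every R-homomorphism from a dense right ideal into R is left
  multiplication by an element of Q.\<close>
definition is_Qmax :: "'a::ring_1 set \<Rightarrow> bool" where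
  "is_Qmax R \<longleftrightarrow> subring R \<and>
     (\<forall>p q. p \<noteq> 0 \<longrightarrow> (\<exists>r\<in>R. p * r \<noteq> 0 \<and> q * r \<in> R)) \<and>
     (\<forall>I f. dense_right_ideal R I \<and> (\<forall>x\<in>I. f x \<in> R) \<and>
            (\<forall>x\<in>I. \<forall>y\<in>I. f (x + y) = f x + f y) \<and>
            (\<forall>x\<in>I. \<forall>r\<in>R. f (x * r) = f x * r)
        \<longrightarrow> (\<exists>q. \<forall>x\<in>I. f x = q * x))"

text \<open>Flatness of S as a left R-module (equational criterion).\<close>
definition flat_left :: "'a::ring_1 set \<Rightarrow> 'a set \<Rightarrow> bool" where
  "flat_left R S \<longleftrightarrow>
     (\<forall>n (r::nat \<Rightarrow> 'a) s. (\<forall>k<n. r k \<in> R \<and> s k \<in> S) \<and> (\<Sum>k<n. r k * s k) = 0 \<longrightarrow>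
        (\<exists>m (a::nat \<Rightarrow> nat \<Rightarrow> 'a) t. (\<forall>j<m. t j \<in> S) \<and> (\<forall>k<n. \<forall>j<m. a k j \<in> R) \<and>
           (\<forall>k<n. s k = (\<Sum>j<m. a k j * t j)) \<and>
           (\<forall>j<m. (\<Sum>k<n. r k * a k j) = 0)))"

definition condition_C :: "'a::ring_1 set \<Rightarrow> bool" where
  "condition_C R \<longleftrightarrow> (\<forall>S. subring S \<and> R \<subseteq> S \<longrightarrow> flat_left R S)"

definition ideal_prod :: "'a::ring_1 set \<Rightarrow> 'a set \<Rightarrow> 'a set" where
  "ideal_prod I S = {x. \<exists>n (i::nat \<Rightarrow> 'a) s. (\<forall>k<n. i k \<in> I \<and> s k \<in> S) \<and> x = (\<Sum>k<n. i k * s k)}"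

definition colon :: "'a::ring_1 set \<Rightarrow> 'a \<Rightarrow> 'a set" where
  "colon R x = {r \<in> R. x * r \<in> R}"

text \<open>R_E for a faithful Gabriel filter E, realised inside Q.\<close>
definition quot_ring :: "'a::ring_1 set \<Rightarrow> 'a set set \<Rightarrow> 'a set" where
  "quot_ring R E = {q. \<exists>I\<in>E. \<forall>x\<in>I. q * x \<in> R}"

definition morita_prime :: "'a::ring_1 set \<Rightarrow> 'a set \<Rightarrow> 'a set" where
  "morita_prime R S = {s \<in> S. \<forall>r\<in>R. ideal_prod (colon R (s * r)) S = S}"

text \<open>Ordinal-indexed positions in a well-ordered index type.\<close>
definition is_least_idx :: "'i::wellorder \<Rightarrow> bool" where
  "is_least_idx a \<longleftrightarrow> (\<forall>b. a \<le> b)"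

definition is_succ_of :: "'i::wellorder \<Rightarrow> 'i \<Rightarrow> bool" where
  "is_succ_of a b \<longleftrightarrow> b < a \<and> (\<forall>c. b < c \<longrightarrow> a \<le> c)"

definition is_limit_idx :: "'i::wellorder \<Rightarrow> bool" where
  "is_limit_idx a \<longleftrightarrow> \<not> is_least_idx a \<and> \<not> (\<exists>b. is_succ_of a b)"

end

(* Transfinite induction on the invariant: E_alpha is an upward closed set of right ideals
   and Q_alpha = R_{E_alpha} is a subring of Q containing R; then q \<in> Q_alpha iff
   (R:q) \<in> E_alpha, so at limits both constructions are intersections.  At a successor,
   S = Q_beta is flat by (C), and flatness turns IS = S into (r^-1 I)S = S; hence
   {I. IS = S} is a Gabriel filter, its ring of quotients is a ring, and
   q \<in> R_E iff (R:q)S = S iff q \<in> S', because (R:qr) contains r^-1 (R:q). *)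
theory Submission
  imports Defs
begin

section \<open>Subrings, right ideals and the products I S\<close>

lemma subring_zero: "subring S \<Longrightarrow> 0 \<in> S"
  unfolding subring_def by (metis diff_self)

lemma subring_diff: "subring S \<Longrightarrow> x \<in> S \<Longrightarrow> y \<in> S \<Longrightarrow> x - y \<in> S"
  unfolding subring_def by blast

lemma subring_mult: "subring S \<Longrightarrow> x \<in> S \<Longrightarrow> y \<in> S \<Longrightarrow> x * y \<in> S"
  unfolding subring_def by blast

lemma subring_uminus: "subring S \<Longrightarrow> x \<in> S \<Longrightarrow> - x \<in> S"
  by (metis subring_zero subring_diff diff_0)

lemma subring_add: "subring S \<Longrightarrow> x \<in> S \<Longrightarrow> y \<in> S \<Longrightarrow> x + y \<in> S"
  by (metis subring_diff subring_uminus diff_minus_eq_add)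

lemma subring_sum: "subring S \<Longrightarrow> (\<And>k. k < (n::nat) \<Longrightarrow> f k \<in> S) \<Longrightarrow> (\<Sum>k<n. f k) \<in> S"
  by (induction n) (auto simp: subring_zero subring_add)

lemma subring_INT: "(\<And>b. b \<in> B \<Longrightarrow> subring (Q b)) \<Longrightarrow> subring (\<Inter>b\<in>B. Q b)"
  unfolding subring_def by blast

lemma right_ideal_subset: "right_ideal R I \<Longrightarrow> I \<subseteq> R"
  unfolding right_ideal_def by blast

lemma right_ideal_mult: "right_ideal R I \<Longrightarrow> x \<in> I \<Longrightarrow> r \<in> R \<Longrightarrow> x * r \<in> I"
  unfolding right_ideal_def by blast

lemma right_ideal_add: "right_ideal R I \<Longrightarrow> x \<in> I \<Longrightarrow> y \<in> I \<Longrightarrow> x + y \<in> I"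
  unfolding right_ideal_def by (metis diff_0 diff_minus_eq_add)

lemma right_ideal_sum:
  "right_ideal R I \<Longrightarrow> (\<And>k. k < (n::nat) \<Longrightarrow> f k \<in> I) \<Longrightarrow> (\<Sum>k<n. f k) \<in> I"
  by (induction n) (auto simp: right_ideal_add, simp add: right_ideal_def)

lemma right_ideal_carrier: "subring R \<Longrightarrow> right_ideal R R"
  unfolding right_ideal_def by (auto simp: subring_zero subring_diff subring_mult)

lemma right_ideal_Int: "right_ideal R I \<Longrightarrow> right_ideal R J \<Longrightarrow> right_ideal R (I \<inter> J)"
  unfolding right_ideal_def by blast

lemma right_ideal_colon: "subring R \<Longrightarrow> right_ideal R (colon R q)"
  unfolding right_ideal_def colon_def
  by (auto simp: subring_zero subring_diff subring_mult right_diff_distrib simp flip: mult.assoc)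

lemma right_ideal_residual:
  assumes "subring R" "right_ideal R I" "r \<in> R"
  shows "right_ideal R {x \<in> R. r * x \<in> I}"
  using assms unfolding right_ideal_def
  by (auto simp: subring_zero subring_diff subring_mult right_diff_distrib simp flip: mult.assoc)

lemma mem_ideal_prodI:
  "(\<And>k. k < (n::nat) \<Longrightarrow> i k \<in> I \<and> s k \<in> S) \<Longrightarrow> (\<Sum>k<n. i k * s k) \<in> ideal_prod I S"
  unfolding ideal_prod_def by blast

lemma mem_ideal_prodE:
  assumes "x \<in> ideal_prod I S"
  obtains n :: nat and i s where "\<forall>k<n. i k \<in> I \<and> s k \<in> S" "x = (\<Sum>k<n. i k * s k)"
  using assms unfolding ideal_prod_def by blast

lemma ideal_prod_mono: "I \<subseteq> J \<Longrightarrow> ideal_prod I S \<subseteq> ideal_prod J S"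
  unfolding ideal_prod_def by blast

lemma ideal_prod_subset:
  assumes "subring S" "I \<subseteq> S"
  shows "ideal_prod I S \<subseteq> S"
proof
  fix x assume "x \<in> ideal_prod I S"
  then obtain n :: nat and i s where "\<forall>k<n. i k \<in> I \<and> s k \<in> S" "x = (\<Sum>k<n. i k * s k)"
    by (rule mem_ideal_prodE)
  then show "x \<in> S"
    using assms by (auto intro!: subring_sum subring_mult)
qed

lemma zero_mem_ideal_prod: "0 \<in> ideal_prod I S"
  using mem_ideal_prodI[of 0] by simp

lemma ideal_prod_add_mult:
  assumes "x \<in> ideal_prod I S" "i \<in> I" "s \<in> S"
  shows "x + i * s \<in> ideal_prod I S"
proof -
  obtain n :: nat and ii ss where "\<forall>k<n. ii k \<in> I \<and> ss k \<in> S"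
    and x: "x = (\<Sum>k<n. ii k * ss k)"
    using assms(1) by (rule mem_ideal_prodE)
  then have "(\<Sum>k<Suc n. (ii(n := i)) k * (ss(n := s)) k) \<in> ideal_prod I S"
    using assms(2,3) by (intro mem_ideal_prodI) (auto simp: less_Suc_eq)
  then show ?thesis
    using x by (simp add: sum.lessThan_Suc)
qed

lemma mult_mem_ideal_prod: "i \<in> I \<Longrightarrow> s \<in> S \<Longrightarrow> i * s \<in> ideal_prod I S"
  using ideal_prod_add_mult[OF zero_mem_ideal_prod] by (metis add_0)

lemma ideal_prod_add:
  assumes "x \<in> ideal_prod I S" "y \<in> ideal_prod I S"
  shows "x + y \<in> ideal_prod I S"
proof -
  obtain n :: nat and i s where i: "\<forall>k<n. i k \<in> I \<and> s k \<in> S"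
    and y: "y = (\<Sum>k<n. i k * s k)"
    using assms(2) by (rule mem_ideal_prodE)
  have "x + (\<Sum>k<m. i k * s k) \<in> ideal_prod I S" if "m \<le> n" for m
    using that
  proof (induction m)
    case 0
    then show ?case using assms(1) by simp
  next
    case (Suc m)
    then have "x + (\<Sum>k<m. i k * s k) + i m * s m \<in> ideal_prod I S"
      using i by (intro ideal_prod_add_mult) auto
    then show ?case by (simp add: add.assoc)
  qed
  then show ?thesis using y by simp
qed

lemma ideal_prod_sum:
  "(\<And>k. k < (n::nat) \<Longrightarrow> f k \<in> ideal_prod I S) \<Longrightarrow> (\<Sum>k<n. f k) \<in> ideal_prod I S"
  by (induction n) (auto simp: zero_mem_ideal_prod ideal_prod_add)

lemma ideal_prod_mult_right:
  assumes "subring S" "x \<in> ideal_prod I S" "t \<in> S"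
  shows "x * t \<in> ideal_prod I S"
proof -
  obtain n :: nat and i s where "\<forall>k<n. i k \<in> I \<and> s k \<in> S"
    and x: "x = (\<Sum>k<n. i k * s k)"
    using assms(2) by (rule mem_ideal_prodE)
  then have "(\<Sum>k<n. i k * (s k * t)) \<in> ideal_prod I S"
    using assms by (intro mem_ideal_prodI) (simp add: subring_mult)
  then show ?thesis
    using x by (simp add: sum_distrib_right mult.assoc)
qed

lemma ideal_prod_eq_iff_one_mem:
  assumes "subring S" "I \<subseteq> S"
  shows "ideal_prod I S = S \<longleftrightarrow> 1 \<in> ideal_prod I S"
proof
  assume "1 \<in> ideal_prod I S"
  then have "S \<subseteq> ideal_prod I S"
    using ideal_prod_mult_right[OF assms(1)] by fastforce
  then show "ideal_prod I S = S"
    using ideal_prod_subset[OF assms] by blast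
qed (use assms(1) in \<open>auto simp: subring_def\<close>)

lemma left_mult_mem_ideal_prod:
  assumes "1 \<in> ideal_prod L S" "\<And>x. x \<in> L \<Longrightarrow> j * x \<in> K"
  shows "j \<in> ideal_prod K S"
proof -
  obtain n :: nat and l s where ls: "\<forall>k<n. l k \<in> L \<and> s k \<in> S"
    and one: "1 = (\<Sum>k<n. l k * s k)"
    using assms(1) by (rule mem_ideal_prodE)
  have "j = j * (\<Sum>k<n. l k * s k)"
    by (simp flip: one)
  also have "\<dots> = (\<Sum>k<n. (j * l k) * s k)"
    by (simp add: sum_distrib_left mult.assoc)
  also have "\<dots> \<in> ideal_prod K S"
    using ls assms(2) by (intro mem_ideal_prodI) blast
  finally show ?thesis .
qed

lemma ideal_prod_subset_ideal_prod:
  assumes "subring S" "J \<subseteq> ideal_prod K S"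
  shows "ideal_prod J S \<subseteq> ideal_prod K S"
proof
  fix x assume "x \<in> ideal_prod J S"
  then obtain n :: nat and j s where "\<forall>k<n. j k \<in> J \<and> s k \<in> S" "x = (\<Sum>k<n. j k * s k)"
    by (rule mem_ideal_prodE)
  then show "x \<in> ideal_prod K S"
    using assms by (auto intro!: ideal_prod_sum ideal_prod_mult_right)
qed

text \<open>Flatness splits the relation \<open>r \<cdot> 1 - \<Sum>k. i k \<cdot> s k = 0\<close> through a free
  module over R; the coefficients \<open>a 0 j\<close> in the resulting decomposition of 1 satisfy
  \<open>r \<cdot> a 0 j \<in> I\<close>.\<close>
lemma flat_left_residual_one_mem:
  assumes R: "subring R" and S: "subring S" "R \<subseteq> S" and flat: "flat_left R S"
    and I: "right_ideal R I" "1 \<in> ideal_prod I S" and r: "r \<in> R"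
  shows "1 \<in> ideal_prod {x \<in> R. r * x \<in> I} S"
proof -
  have "1 * r \<in> ideal_prod I S"
    using ideal_prod_mult_right[OF S(1) I(2)] r S(2) by blast
  then have "r \<in> ideal_prod I S"
    by simp
  then obtain n :: nat and i s where i_s: "\<forall>k<n. i k \<in> I \<and> s k \<in> S"
    and r_eq: "r = (\<Sum>k<n. i k * s k)"
    by (rule mem_ideal_prodE)
  define c where "c k = (if k = 0 then r else - i (k - 1))" for k
  define t where "t k = (if k = 0 then 1 else s (k - 1))" for k
  have "\<forall>k<Suc n. c k \<in> R \<and> t k \<in> S"
    using i_s right_ideal_subset[OF I(1)] r S subring_uminus[OF R]
    by (auto simp: c_def t_def less_Suc_eq_0_disj subring_def)
  moreover have "(\<Sum>k<Suc n. c k * t k) = 0"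
    unfolding sum.lessThan_Suc_shift by (simp add: c_def t_def sum_negf r_eq)
  ultimately obtain m :: nat and a u where u: "\<forall>j<m. u j \<in> S"
    and a: "\<forall>k<Suc n. \<forall>j<m. a k j \<in> R"
    and t: "\<forall>k<Suc n. t k = (\<Sum>j<m. a k j * u j)"
    and rel: "\<forall>j<m. (\<Sum>k<Suc n. c k * a k j) = 0"
    using flat[unfolded flat_left_def, rule_format, of "Suc n" c t] by blast
  have "r * a 0 j \<in> I" if j: "j < m" for j
  proof -
    have "r * a 0 j = (\<Sum>k<n. i k * a (Suc k) j)"
      using rel j unfolding sum.lessThan_Suc_shift
      by (simp add: c_def sum_negf add_eq_0_iff2)
    also have "\<dots> \<in> I"
      using i_s a j I(1) by (intro right_ideal_sum) (auto intro: right_ideal_mult)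
    finally show ?thesis .
  qed
  then have "(\<Sum>j<m. a 0 j * u j) \<in> ideal_prod {x \<in> R. r * x \<in> I} S"
    using a u by (intro mem_ideal_prodI) auto
  moreover have "t 0 = 1"
    by (simp add: t_def)
  ultimately show ?thesis
    using t by auto
qed

section \<open>Gabriel filters and their rings of quotients\<close>

definition upward_filter :: "'a::ring_1 set \<Rightarrow> 'a set set \<Rightarrow> bool" where
  "upward_filter R E \<longleftrightarrow> (\<forall>I\<in>E. right_ideal R I) \<and>
     (\<forall>I\<in>E. \<forall>J. right_ideal R J \<and> I \<subseteq> J \<longrightarrow> J \<in> E)"

definition gabriel_filter :: "'a::ring_1 set \<Rightarrow> 'a set set \<Rightarrow> bool" where
  "gabriel_filter R E \<longleftrightarrow> upward_filter R E \<and> R \<in> E \<and>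
     (\<forall>I\<in>E. \<forall>r\<in>R. {x \<in> R. r * x \<in> I} \<in> E) \<and>
     (\<forall>J\<in>E. \<forall>K. right_ideal R K \<and> (\<forall>j\<in>J. {x \<in> R. j * x \<in> K} \<in> E) \<longrightarrow> K \<in> E)"

lemma upward_filterD:
  assumes "upward_filter R E"
  shows "I \<in> E \<Longrightarrow> right_ideal R I"
    and "I \<in> E \<Longrightarrow> right_ideal R J \<Longrightarrow> I \<subseteq> J \<Longrightarrow> J \<in> E"
  using assms unfolding upward_filter_def by blast+

lemma gabriel_filterD:
  assumes "gabriel_filter R E"
  shows "upward_filter R E" and "R \<in> E"
    and "I \<in> E \<Longrightarrow> r \<in> R \<Longrightarrow> {x \<in> R. r * x \<in> I} \<in> E"
    and "J \<in> E \<Longrightarrow> right_ideal R K \<Longrightarrow> (\<And>j. j \<in> J \<Longrightarrow> {x \<in> R. j * x \<in> K} \<in> E)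
           \<Longrightarrow> K \<in> E"
  using assms unfolding gabriel_filter_def by blast+

lemma upward_filter_INT:
  assumes "B \<noteq> {}" and upward: "\<And>b. b \<in> B \<Longrightarrow> upward_filter R (E b)"
  shows "upward_filter R (\<Inter>b\<in>B. E b)"
  unfolding upward_filter_def
proof (intro conjI ballI allI impI)
  fix I assume I: "I \<in> (\<Inter>b\<in>B. E b)"
  obtain b where "b \<in> B"
    using assms(1) by blast
  then show "right_ideal R I"
    using I upward_filterD(1)[OF upward] by blast
  show "J \<in> (\<Inter>b\<in>B. E b)" if "right_ideal R J \<and> I \<subseteq> J" for J
    using I that upward_filterD(2)[OF upward] by blast
qed

lemma quot_ring_iff_colon:
  assumes "subring R" "upward_filter R E"
  shows "q \<in> quot_ring R E \<longleftrightarrow> colon R q \<in> E"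
proof
  assume "q \<in> quot_ring R E"
  then obtain I where I: "I \<in> E" "\<forall>x\<in>I. q * x \<in> R"
    unfolding quot_ring_def by blast
  then have "I \<subseteq> colon R q"
    using right_ideal_subset upward_filterD(1)[OF assms(2)] unfolding colon_def by blast
  then show "colon R q \<in> E"
    using upward_filterD(2)[OF assms(2) I(1)] right_ideal_colon[OF assms(1)] by blast
next
  assume "colon R q \<in> E"
  moreover have "\<forall>x\<in>colon R q. q * x \<in> R"
    unfolding colon_def by blast
  ultimately show "q \<in> quot_ring R E"
    unfolding quot_ring_def by blast
qed

lemma gabriel_filter_Int:
  assumes R: "subring R" and E: "gabriel_filter R E" and I: "I \<in> E" and J: "J \<in> E"
  shows "I \<inter> J \<in> E"
proof (rule gabriel_filterD(4)[OF E J])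
  have ideals: "right_ideal R I" "right_ideal R J"
    using I J upward_filterD(1)[OF gabriel_filterD(1)[OF E]] by auto
  then show "right_ideal R (I \<inter> J)"
    by (rule right_ideal_Int)
  fix j assume j: "j \<in> J"
  then have "j \<in> R"
    using right_ideal_subset[OF ideals(2)] by blast
  then have "{x \<in> R. j * x \<in> I} \<in> E"
    using gabriel_filterD(3)[OF E I] by blast
  moreover have "{x \<in> R. j * x \<in> I} \<subseteq> {x \<in> R. j * x \<in> I \<inter> J}"
    using j right_ideal_mult[OF ideals(2)] by blast
  moreover have "right_ideal R {x \<in> R. j * x \<in> I \<inter> J}"
    using right_ideal_residual[OF R right_ideal_Int[OF ideals] \<open>j \<in> R\<close>] .
  ultimately show "{x \<in> R. j * x \<in> I \<inter> J} \<in> E"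
    using upward_filterD(2)[OF gabriel_filterD(1)[OF E]] by blast
qed

lemma subring_quot_ring:
  assumes R: "subring R" and E: "gabriel_filter R E"
  shows "subring (quot_ring R E)"
  unfolding subring_def
proof (intro conjI ballI)
  note mem_quot = quot_ring_iff_colon[OF R gabriel_filterD(1)[OF E]]
  note upward = upward_filterD(2)[OF gabriel_filterD(1)[OF E]]
  have "colon R 1 = R"
    unfolding colon_def by simp
  then show "1 \<in> quot_ring R E"
    using mem_quot gabriel_filterD(2)[OF E] by simp
  fix x y assume "x \<in> quot_ring R E" "y \<in> quot_ring R E"
  then have x: "colon R x \<in> E" and y: "colon R y \<in> E"
    using mem_quot by auto
  have "colon R x \<inter> colon R y \<subseteq> colon R (x - y)"
    unfolding colon_def using subring_diff[OF R] by (auto simp: left_diff_distrib)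
  then show "x - y \<in> quot_ring R E"
    using upward gabriel_filter_Int[OF R E x y] right_ideal_colon[OF R] mem_quot by blast
  have "colon R (x * y) \<in> E"
  proof (rule gabriel_filterD(4)[OF E y right_ideal_colon[OF R]])
    fix j assume "j \<in> colon R y"
    then have "j \<in> R" "y * j \<in> R"
      unfolding colon_def by auto
    then have "{z \<in> R. (y * j) * z \<in> colon R x} \<in> E"
      using gabriel_filterD(3)[OF E x] by blast
    moreover have "(y * j) * z \<in> colon R x \<longleftrightarrow> j * z \<in> colon R (x * y)" if "z \<in> R" for z
      using subring_mult[OF R \<open>y * j \<in> R\<close> that] subring_mult[OF R \<open>j \<in> R\<close> that]
      unfolding colon_def by (simp add: mult.assoc)
    ultimately show "{z \<in> R. j * z \<in> colon R (x * y)} \<in> E"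
      by (metis (no_types, lifting) Collect_cong)
  qed
  then show "x * y \<in> quot_ring R E"
    using mem_quot by blast
qed

text \<open>For S flat over R, \<open>(R/I) \<otimes>\<^sub>R S \<cong> S/IS\<close>, so this is the Gabriel filter of \<open>\<tau>\<^sub>S\<close>.\<close>
definition tau_filter :: "'a::ring_1 set \<Rightarrow> 'a set \<Rightarrow> 'a set set" where
  "tau_filter R S = {I. right_ideal R I \<and> ideal_prod I S = S}"

lemma mem_tau_filter_iff:
  assumes "subring S" "R \<subseteq> S"
  shows "I \<in> tau_filter R S \<longleftrightarrow> right_ideal R I \<and> 1 \<in> ideal_prod I S"
proof (cases "right_ideal R I")
  case True
  then have "I \<subseteq> S"
    using right_ideal_subset assms(2) by blast
  then show ?thesis
    unfolding tau_filter_def using True ideal_prod_eq_iff_one_mem[OF assms(1)] by simp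
qed (simp add: tau_filter_def)

lemma gabriel_filter_tau_filter:
  assumes R: "subring R" and S: "subring S" "R \<subseteq> S" and flat: "flat_left R S"
  shows "gabriel_filter R (tau_filter R S)"
  unfolding gabriel_filter_def upward_filter_def
proof (intro conjI ballI allI impI)
  note mem_tau = mem_tau_filter_iff[OF S]
  fix I assume I: "I \<in> tau_filter R S"
  then show "right_ideal R I"
    by (simp add: tau_filter_def)
  have one: "1 \<in> ideal_prod I S"
    using I by (simp add: mem_tau)
  show "J \<in> tau_filter R S" if "right_ideal R J \<and> I \<subseteq> J" for J
    using that one ideal_prod_mono[of I J S] by (auto simp: mem_tau)
  show "{x \<in> R. r * x \<in> I} \<in> tau_filter R S" if "r \<in> R" for r
    using I that right_ideal_residual[OF R] flat_left_residual_one_mem[OF R S flat]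
    by (simp add: mem_tau)
  show "K \<in> tau_filter R S"
    if "right_ideal R K \<and> (\<forall>j\<in>I. {x \<in> R. j * x \<in> K} \<in> tau_filter R S)" for K
  proof -
    have "j \<in> ideal_prod K S" if "j \<in> I" for j
    proof (rule left_mult_mem_ideal_prod)
      show "1 \<in> ideal_prod {x \<in> R. j * x \<in> K} S"
        using \<open>j \<in> I\<close> \<open>right_ideal R K \<and> _\<close> by (simp add: mem_tau)
    qed simp
    then have "ideal_prod I S \<subseteq> ideal_prod K S"
      using ideal_prod_subset_ideal_prod[OF S(1)] by blast
    then show ?thesis
      using one \<open>right_ideal R K \<and> _\<close> by (auto simp: mem_tau)
  qed
next
  have "1 * 1 \<in> ideal_prod R S"
    using R S(1) unfolding subring_def by (blast intro: mult_mem_ideal_prod)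
  then show "R \<in> tau_filter R S"
    using mem_tau_filter_iff[OF S] right_ideal_carrier[OF R] by simp
qed

lemma quot_ring_tau_filter:
  assumes R: "subring R" and S: "subring S" "R \<subseteq> S" and flat: "flat_left R S"
  shows "quot_ring R (tau_filter R S) = morita_prime R S"
proof
  note E = gabriel_filter_tau_filter[OF assms]
  note mem_quot = quot_ring_iff_colon[OF R gabriel_filterD(1)[OF E]]
  note mem_tau = mem_tau_filter_iff[OF S]
  show "quot_ring R (tau_filter R S) \<subseteq> morita_prime R S"
  proof
    fix q assume "q \<in> quot_ring R (tau_filter R S)"
    then have q: "colon R q \<in> tau_filter R S"
      using mem_quot by blast
    then have "q \<in> ideal_prod R S"
      using mem_tau unfolding colon_def by (blast intro: left_mult_mem_ideal_prod)
    then have "q \<in> S"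
      using ideal_prod_subset[OF S] by blast
    moreover have "ideal_prod (colon R (q * r)) S = S" if r: "r \<in> R" for r
    proof -
      have "{x \<in> R. r * x \<in> colon R q} \<in> tau_filter R S"
        using gabriel_filterD(3)[OF E q r] .
      moreover have "{x \<in> R. r * x \<in> colon R q} \<subseteq> colon R (q * r)"
        unfolding colon_def by (auto simp: mult.assoc)
      ultimately have "colon R (q * r) \<in> tau_filter R S"
        using upward_filterD(2)[OF gabriel_filterD(1)[OF E]] right_ideal_colon[OF R] by blast
      then show ?thesis
        unfolding tau_filter_def by blast
    qed
    ultimately show "q \<in> morita_prime R S"
      unfolding morita_prime_def by blast
  qed
  show "morita_prime R S \<subseteq> quot_ring R (tau_filter R S)"
  proof
    fix s assume "s \<in> morita_prime R S"
    then have "ideal_prod (colon R (s * 1)) S = S"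
      using R unfolding morita_prime_def subring_def by blast
    then have "colon R s \<in> tau_filter R S"
      using right_ideal_colon[OF R] unfolding tau_filter_def by simp
    then show "s \<in> quot_ring R (tau_filter R S)"
      using mem_quot by blast
  qed
qed

lemma upward_filter_dense: "upward_filter R {I. dense_right_ideal R I}"
  unfolding upward_filter_def dense_right_ideal_def by blast

lemma dense_right_ideal_colon:
  assumes Q: "is_Qmax R"
  shows "dense_right_ideal R (colon R q)"
  unfolding dense_right_ideal_def
proof (intro conjI ballI impI)
  have R: "subring R"
    using Q unfolding is_Qmax_def by blast
  then show "right_ideal R (colon R q)"
    by (rule right_ideal_colon)
  fix r1 r2 assume r: "r1 \<in> R" "r2 \<in> R" "r1 \<noteq> 0"
  then obtain r where "r \<in> R" "r1 * r \<noteq> 0" "(q * r2) * r \<in> R"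
    using Q unfolding is_Qmax_def by blast
  then show "\<exists>r\<in>R. r1 * r \<noteq> 0 \<and> r2 * r \<in> colon R q"
    using r subring_mult[OF R] unfolding colon_def by (auto simp: mult.assoc)
qed

section \<open>The transfinite construction\<close>

definition quotient_stage :: "'a::ring_1 set \<Rightarrow> 'a set set \<Rightarrow> 'a set \<Rightarrow> bool" where
  "quotient_stage R E Q \<longleftrightarrow> upward_filter R E \<and> Q = quot_ring R E \<and> subring Q \<and> R \<subseteq> Q"

lemma quotient_stage_dense:
  assumes Q: "is_Qmax R"
  shows "quotient_stage R {I. dense_right_ideal R I} UNIV"
proof -
  have R: "subring R"
    using Q unfolding is_Qmax_def by blast
  have "quot_ring R {I. dense_right_ideal R I} = UNIV"
    using quot_ring_iff_colon[OF R upward_filter_dense] dense_right_ideal_colon[OF Q] by blast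
  then show ?thesis
    unfolding quotient_stage_def using upward_filter_dense by (simp add: subring_def)
qed

lemma quotient_stage_tau_filter:
  assumes R: "subring R" and C: "condition_C R" and stage: "quotient_stage R E S"
  shows "quotient_stage R (tau_filter R S) (morita_prime R S)"
proof -
  have S: "subring S" "R \<subseteq> S"
    using stage unfolding quotient_stage_def by auto
  then have flat: "flat_left R S"
    using C unfolding condition_C_def by blast
  note E = gabriel_filter_tau_filter[OF R S flat]
  have "R \<subseteq> quot_ring R (tau_filter R S)"
    using gabriel_filterD(2)[OF E] subring_mult[OF R] unfolding quot_ring_def by blast
  then show ?thesis
    unfolding quotient_stage_def quot_ring_tau_filter[OF R S flat, symmetric]
    using gabriel_filterD(1)[OF E] subring_quot_ring[OF R E] by blast
qed

lemma quotient_stage_INT: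
  assumes R: "subring R" and "B \<noteq> {}"
    and stages: "\<And>b. b \<in> B \<Longrightarrow> quotient_stage R (E b) (Q b)"
  shows "quotient_stage R (\<Inter>b\<in>B. E b) (\<Inter>b\<in>B. Q b)"
proof -
  have upward: "upward_filter R (E b)" and Q: "Q b = quot_ring R (E b)"
    and sub: "subring (Q b)" "R \<subseteq> Q b" if "b \<in> B" for b
    using stages[OF that] unfolding quotient_stage_def by auto
  have upward_INT: "upward_filter R (\<Inter>b\<in>B. E b)"
    using \<open>B \<noteq> {}\<close> upward by (rule upward_filter_INT)
  have "q \<in> quot_ring R (\<Inter>b\<in>B. E b) \<longleftrightarrow> q \<in> (\<Inter>b\<in>B. Q b)" for q
  proof -
    have "q \<in> quot_ring R (\<Inter>b\<in>B. E b) \<longleftrightarrow> (\<forall>b\<in>B. colon R q \<in> E b)"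
      using quot_ring_iff_colon[OF R upward_INT] by simp
    also have "\<dots> \<longleftrightarrow> (\<forall>b\<in>B. q \<in> Q b)"
      using quot_ring_iff_colon[OF R upward] Q by simp
    finally show ?thesis
      by simp
  qed
  then have "(\<Inter>b\<in>B. Q b) = quot_ring R (\<Inter>b\<in>B. E b)"
    by blast
  moreover have "subring (\<Inter>b\<in>B. Q b)"
    using sub(1) by (rule subring_INT)
  moreover have "R \<subseteq> (\<Inter>b\<in>B. Q b)"
    using sub(2) \<open>B \<noteq> {}\<close> by blast
  ultimately show ?thesis
    unfolding quotient_stage_def using upward_INT by blast
qed

lemma is_limit_idx_imp_ex_less: "is_limit_idx a \<Longrightarrow> \<exists>b. b < a"
  unfolding is_limit_idx_def is_least_idx_def by (meson not_le)

lemma idx_induct [case_names least succ limit]: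
  fixes P :: "'i::wellorder \<Rightarrow> bool"
  assumes "\<And>a. is_least_idx a \<Longrightarrow> P a"
    and "\<And>a b. is_succ_of a b \<Longrightarrow> P b \<Longrightarrow> P a"
    and "\<And>a. is_limit_idx a \<Longrightarrow> (\<And>b. b < a \<Longrightarrow> P b) \<Longrightarrow> P a"
  shows "P a"
proof (induction a rule: less_induct)
  case (less a)
  consider "is_least_idx a" | b where "is_succ_of a b" | "is_limit_idx a"
    unfolding is_limit_idx_def by blast
  then show ?case
    using assms less.IH unfolding is_succ_of_def by cases blast+
qed

theorem proposition3p3:
  fixes R :: "'a::ring_1 set"
    and E :: "'i::wellorder \<Rightarrow> 'a set set"
    and Qa :: "'i \<Rightarrow> 'a set"
    and Qm :: "'i \<Rightarrow> 'a set"
  assumes Qmax: "is_Qmax R"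
    and C: "condition_C R"
    and E0: "\<And>a. is_least_idx a \<Longrightarrow> E a = {I. dense_right_ideal R I} \<and> Qa a = UNIV"
    and Esuc: "\<And>a b. is_succ_of a b \<Longrightarrow>
         E a = {I. right_ideal R I \<and> ideal_prod I (Qa b) = Qa b} \<and> Qa a = quot_ring R (E a)"
    and Elim: "\<And>a. is_limit_idx a \<Longrightarrow>
         E a = (\<Inter>b\<in>{..<a}. E b) \<and> Qa a = quot_ring R (E a)"
    and M0: "\<And>a. is_least_idx a \<Longrightarrow> Qm a = UNIV"
    and Msuc: "\<And>a b. is_succ_of a b \<Longrightarrow> Qm a = morita_prime R (Qm b)"
    and Mlim: "\<And>a. is_limit_idx a \<Longrightarrow> Qm a = (\<Inter>b\<in>{..<a}. Qm b)"
  shows "\<forall>a. Qa a = Qm a"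
proof
  have R: "subring R"
    using Qmax unfolding is_Qmax_def by blast
  fix a
  have "quotient_stage R (E a) (Qa a) \<and> Qa a = Qm a"
  proof (induction a rule: idx_induct)
    case (least a)
    then show ?case
      using E0 M0 quotient_stage_dense[OF Qmax] by simp
  next
    case (succ a b)
    have stage: "quotient_stage R (tau_filter R (Qa b)) (morita_prime R (Qa b))"
      using quotient_stage_tau_filter[OF R C] succ(2) by blast
    have "E a = tau_filter R (Qa b)"
      using Esuc[OF succ(1)] unfolding tau_filter_def by blast
    moreover have "Qa a = morita_prime R (Qa b)"
      using Esuc[OF succ(1)] stage calculation unfolding quotient_stage_def by simp
    ultimately show ?case
      using stage Msuc[OF succ(1)] succ(2) by simp
  next
    case (limit a)
    have "{..<a} \<noteq> {}"
      using is_limit_idx_imp_ex_less[OF limit(1)] by auto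
    with R have stage: "quotient_stage R (\<Inter>b\<in>{..<a}. E b) (\<Inter>b\<in>{..<a}. Qa b)"
      by (rule quotient_stage_INT) (use limit(2) in blast)
    have "E a = (\<Inter>b\<in>{..<a}. E b)" "Qa a = quot_ring R (E a)"
      using Elim[OF limit(1)] by auto
    then have "Qa a = (\<Inter>b\<in>{..<a}. Qa b)"
      using stage unfolding quotient_stage_def by simp
    moreover have "(\<Inter>b\<in>{..<a}. Qa b) = Qm a"
      using Mlim[OF limit(1)] limit(2) by simp
    ultimately show ?case
      using stage \<open>E a = _\<close> by simp
  qed
  then show "Qa a = Qm a" ..
qed

end
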